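(* For every integer $m\ge0$ and $n\ge0$, $$x^n=\sum_{k=0}^{\lfloor n/2\rfloor}\frac{[n]!}{[k]!\,[n-2k]!}\,\frac{[n+m-2k]!}{[n+m-k]!}\,\frac{q^ks^k}{(-q;q)_k\,(-q^{n+m+1-2k};q)_k}\,v_{n-2k}(x,m,s,q).$$ Consequently, if $\Phi_{m,q}$ is the linear functional on polynomials in $x$ determined by $\Phi_{m,q}(v_n(x,m,1,q))=[n=0]$ for all $n\ge 0$, then $\Phi_{m,q}(x^{2n+1})=0$ and $$\Phi_{m,q}(x^{2n})=\frac{q^n}{(-q;q)_n\,(-q^{m+1};q)_n}\cdot\frac{[2n]!\,[m]!}{[n]!\,[m+n]!}\quad(n\ge0).$$
   Context: $q$ is an indeterminate; $[n]=\frac{1-q^n}{1-q}$, $[n]!=[1]\cdots[n]$, $[0]!=1$, $(a;q)_n=(1-a)(1-qa)\cdots(1-q^{n-1}a)$, $(a;q)_0=1$. For an integer $m\ge 0$ and indeterminates $x,s$, $$v_n(x,m,s,q)=\sum_{k=0}^{\lfloor n/2\rfloor}(-s)^kq^{k^2}\frac{[n]!}{[k]!\,[n-2k]!}\,\frac{[m+n-k-1]!}{[m+n-1]!}\,\frac{1}{(-q;q)_k\,(-q^{n+m-k};q)_k}\,x^{n-2k}\quad(n\ge1),\qquad v_0=1.$$ $[P]$ is the Iverson bracket. *)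

theory Defs
  imports "HOL-Computational_Algebra.Polynomial"
begin

definition qint :: "'a::field \<Rightarrow> nat \<Rightarrow> 'a" where
  "qint q n = (\<Sum>i<n. q ^ i)"

definition qfact :: "'a::field \<Rightarrow> nat \<Rightarrow> 'a" where
  "qfact q n = (\<Prod>i=1..n. qint q i)"

definition qpoch :: "'a::field \<Rightarrow> 'a \<Rightarrow> nat \<Rightarrow> 'a" where
  "qpoch a q n = (\<Prod>i<n. (1 - q ^ i * a))"

definition vpoly :: "nat \<Rightarrow> 'a::field \<Rightarrow> 'a \<Rightarrow> nat \<Rightarrow> 'a poly" where
  "vpoly m s q n =
    (if n = 0 then 1 else
     (\<Sum>k=0..n div 2.
        smult ((- s) ^ k * q ^ (k ^ 2)
               * (qfact q n / (qfact q k * qfact q (n - 2 * k)))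
               * (qfact q (m + n - k - 1) / qfact q (m + n - 1))
               / (qpoch (- q) q k * qpoch (- (q ^ (n + m - k))) q k))
              (monom 1 (n - 2 * k))))"

definition lin_functional :: "('a::field poly \<Rightarrow> 'a) \<Rightarrow> bool" where
  "lin_functional \<Phi> \<longleftrightarrow>
     (\<forall>p r. \<Phi> (p + r) = \<Phi> p + \<Phi> r) \<and> (\<forall>c p. \<Phi> (smult c p) = c * \<Phi> p)"

end

theory Submission imports Defs begin

(* Write v_n for vpoly m s q n, A(n,k) for its coefficient of x^(n-2k) (vcoef) and B(n,j) for
   the claimed coefficient of v_(n-2j) in x^n (xcoef).  Absorbing the q-Pochhammer symbols via
   [i](1+q^i) = [2i] turns both into plain quotients of q-factorials ([k]!(-q;q)_k = [2][4]..[2k]). *)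

section \<open>q-integers, q-factorials and q-Pochhammer symbols\<close>

lemma qint_Suc: "qint q (Suc n) = qint q n + q ^ n"
  by (simp add: qint_def)

lemma qint_add: "qint q (a + b) = qint q a + q ^ a * qint q b"
  by (induction b) (simp_all add: qint_Suc qint_def[of q 0] algebra_simps power_add)

text \<open>Doubling: \<open>[2t] = [t](1 + q^t)\<close>; this is how q-Pochhammer factors \<open>(-q^a;q)\<close> are absorbed.\<close>
lemma qint_double: "qint q (2 * t) = qint q t * (1 + q ^ t)"
  unfolding mult_2 qint_add by (simp add: algebra_simps)

text \<open>The exchange identity behind both coefficient recurrences.\<close>
lemma qint_exchange:
  "qint q (u + c) * qint q (z + u) = qint q u * qint q (z + u + c) + q ^ u * qint q c * qint q z"
  by (simp add: qint_add power_add algebra_simps)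

lemma power_Suc_square: "(x::'a::monoid_mult) ^ (Suc K ^ 2) = x ^ (K ^ 2) * x ^ (2 * K + 1)"
proof -
  have "Suc K ^ 2 = K ^ 2 + (2 * K + 1)" by (simp add: power2_eq_square)
  then show ?thesis by (simp only: power_add)
qed

lemma qfact_0 [simp]: "qfact q 0 = 1"
  by (simp add: qfact_def)

lemma qfact_Suc: "qfact q (Suc n) = qfact q n * qint q (Suc n)"
  by (simp add: qfact_def prod.nat_ivl_Suc' mult.commute)

lemma qfact_pred: "1 \<le> n \<Longrightarrow> qfact q n = qfact q (n - 1) * qint q n"
  using qfact_Suc[of q "n - 1"] by simp

lemma qfact_prod: "qfact q k = (\<Prod>i<k. qint q (i + 1))"
  by (induction k) (simp_all add: qfact_Suc)

lemma qfact_add: "qfact q (a + k) = qfact q a * (\<Prod>i<k. qint q (a + 1 + i))"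
  by (induction k) (simp_all add: qfact_Suc)

definition qfact_even :: "'a::field \<Rightarrow> nat \<Rightarrow> 'a" where
  "qfact_even q k = (\<Prod>i<k. qint q (2 * (i + 1)))"

definition qrise_even :: "'a::field \<Rightarrow> nat \<Rightarrow> nat \<Rightarrow> 'a" where
  "qrise_even q a k = (\<Prod>i<k. qint q (2 * (a + i)))"

lemma qfact_even_Suc: "qfact_even q (Suc k) = qfact_even q k * qint q (2 * (k + 1))"
  by (simp add: qfact_even_def)

lemma qrise_even_Suc: "qrise_even q a (Suc k) = qrise_even q a k * qint q (2 * (a + k))"
  by (simp add: qrise_even_def)

lemma qrise_even_Suc_left: "qrise_even q a (Suc k) = qint q (2 * a) * qrise_even q (Suc a) k"
  unfolding qrise_even_def prod.lessThan_Suc_shift by simp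

lemma qrise_even_shift:
  "qrise_even q a k * qint q (2 * (a + k)) = qint q (2 * a) * qrise_even q (Suc a) k"
  by (metis qrise_even_Suc qrise_even_Suc_left)

lemma qfact_qpoch: "qfact q k * qpoch (- q) q k = qfact_even q k"
proof -
  have "qfact q k * qpoch (- q) q k = (\<Prod>i<k. qint q (i + 1) * (1 + q ^ (i + 1)))"
    unfolding qfact_prod qpoch_def prod.distrib[symmetric] by (simp add: mult.commute)
  also have "\<dots> = qfact_even q k"
    unfolding qfact_even_def qint_double ..
  finally show ?thesis .
qed

lemma qrise_qpoch: "(\<Prod>i<k. qint q (a + i)) * qpoch (- (q ^ a)) q k = qrise_even q a k"
proof -
  have "(\<Prod>i<k. qint q (a + i)) * qpoch (- (q ^ a)) q k
      = (\<Prod>i<k. qint q (a + i) * (1 + q ^ (a + i)))"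
    unfolding qpoch_def prod.distrib[symmetric] by (simp add: power_add mult.commute)
  also have "\<dots> = qrise_even q a k"
    unfolding qrise_even_def qint_double ..
  finally show ?thesis .
qed

definition vcoef :: "nat \<Rightarrow> 'a::field \<Rightarrow> 'a \<Rightarrow> nat \<Rightarrow> nat \<Rightarrow> 'a" where
  "vcoef m s q n k = (if k \<le> n div 2 then
     (- s) ^ k * q ^ (k ^ 2) * qfact q n
       / (qfact q (n - 2 * k) * qfact_even q k * qrise_even q (n + m - k) k) else 0)"

definition xcoef :: "nat \<Rightarrow> 'a::field \<Rightarrow> 'a \<Rightarrow> nat \<Rightarrow> nat \<Rightarrow> 'a" where
  "xcoef m s q n j = (if j \<le> n div 2 then
     q ^ j * s ^ j * qfact q n
       / (qfact q (n - 2 * j) * qfact_even q j * qrise_even q (n + m + 1 - 2 * j) j) else 0)"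

text \<open>The coefficient \<open>g_n\<close> of the three-term recurrence \<open>x v_n = v_(n+1) + g_n v_(n-1)\<close>.\<close>
definition rcoef :: "nat \<Rightarrow> 'a::field \<Rightarrow> 'a \<Rightarrow> nat \<Rightarrow> 'a" where
  "rcoef m s q n = (if n = 0 then 0 else if n = 1 then s * q / qint q (2 * m + 2) else
     s * q ^ n * qint q n * qint q (n + 2 * m - 1)
       / (qint q (2 * m + 2 * n) * qint q (2 * m + 2 * n - 2)))"

lemma vcoef_closed:
  assumes "k \<le> n div 2" "n - 2 * k = r" "n + m - k = a"
  shows "vcoef m s q n k
       = (- s) ^ k * q ^ (k ^ 2) * qfact q n / (qfact q r * qfact_even q k * qrise_even q a k)"
  by (simp only: vcoef_def if_P[OF assms(1)] assms(2,3))

lemma xcoef_closed: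
  assumes "j \<le> n div 2" "n - 2 * j = r" "n + m + 1 - 2 * j = a"
  shows "xcoef m s q n j
       = q ^ j * s ^ j * qfact q n / (qfact q r * qfact_even q j * qrise_even q a j)"
  by (simp only: xcoef_def if_P[OF assms(1)] assms(2,3))

lemma lin_functional_zero: "lin_functional \<Phi> \<Longrightarrow> \<Phi> 0 = 0"
  unfolding lin_functional_def by (metis add_cancel_right_right add_0)

lemma lin_functional_sum: "lin_functional \<Phi> \<Longrightarrow> \<Phi> (sum f A) = (\<Sum>x\<in>A. \<Phi> (f x))"
  by (induct A rule: infinite_finite_induct) (auto simp: lin_functional_zero lin_functional_def)

locale q_generic =
  fixes q :: "'a::field"
  assumes qint_nz: "\<And>j. j \<ge> 1 \<Longrightarrow> qint q j \<noteq> 0"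
      and qpow_nz: "\<And>j. j \<ge> 1 \<Longrightarrow> 1 + q ^ j \<noteq> 0"
begin

declare qint_nz [simp] qpow_nz [simp]

lemma qfact_nonzero [simp]: "qfact q n \<noteq> 0"
  by (induction n) (simp_all add: qfact_Suc)

lemma qfact_even_nonzero [simp]: "qfact_even q k \<noteq> 0"
  by (simp add: qfact_even_def)

lemma qrise_even_nonzero [simp]: "1 \<le> a \<Longrightarrow> qrise_even q a k \<noteq> 0"
  by (simp add: qrise_even_def)

lemma vcoef_0: "vcoef m s q n 0 = 1"
  by (simp add: vcoef_def qfact_even_def qrise_even_def)

lemma xcoef_0: "xcoef m s q n 0 = 1"
  by (simp add: xcoef_def qfact_even_def qrise_even_def)

lemma vcoef_explicit:
  assumes n: "1 \<le> n" and k: "k \<le> n div 2"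
  shows "(- s) ^ k * q ^ (k ^ 2) * (qfact q n / (qfact q k * qfact q (n - 2 * k)))
           * (qfact q (m + n - k - 1) / qfact q (m + n - 1))
           / (qpoch (- q) q k * qpoch (- (q ^ (n + m - k))) q k) = vcoef m s q n k"
proof -
  define a where "a = n + m - k"
  have a1: "1 \<le> a" using n k unfolding a_def by linarith
  have split_a: "m + n - k - 1 + k = m + n - 1" "\<And>i. m + n - k - 1 + 1 + i = a + i"
    using n k unfolding a_def by linarith+
  have F: "qfact q (m + n - 1) = qfact q (m + n - k - 1) * (\<Prod>i<k. qint q (a + i))"
    using qfact_add[of q "m + n - k - 1" k] unfolding split_a .
  have P: "(\<Prod>i<k. qint q (a + i)) \<noteq> 0" using a1 by simp
  show ?thesis using n k a1 P
    unfolding vcoef_def F qfact_qpoch[symmetric] a_def[symmetric] qrise_qpoch[symmetric]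
    by (simp add: field_simps)
qed

lemma xcoef_explicit:
  assumes j: "j \<le> n div 2"
  shows "(qfact q n / (qfact q j * qfact q (n - 2 * j)))
           * (qfact q (n + m - 2 * j) / qfact q (n + m - j))
           * (q ^ j * s ^ j / (qpoch (- q) q j * qpoch (- (q ^ (n + m + 1 - 2 * j))) q j))
         = xcoef m s q n j"
proof -
  define a where "a = n + m + 1 - 2 * j"
  have j2: "2 * j \<le> n" using j by presburger
  have a1: "1 \<le> a" unfolding a_def using j2 by linarith
  have split_a: "n + m - 2 * j + j = n + m - j" "\<And>i. n + m - 2 * j + 1 + i = a + i"
    using j2 unfolding a_def by linarith+
  have F: "qfact q (n + m - j) = qfact q (n + m - 2 * j) * (\<Prod>i<j. qint q (a + i))"
    using qfact_add[of q "n + m - 2 * j" j] unfolding split_a .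
  have P: "(\<Prod>i<j. qint q (a + i)) \<noteq> 0" using a1 by simp
  show ?thesis using j a1 P j2
    unfolding xcoef_def F qfact_qpoch[symmetric] a_def[symmetric] qrise_qpoch[symmetric]
    by (simp add: field_simps)
qed

section \<open>Recurrence for the coefficients of \<open>v_n\<close>\<close>

lemma vcoef_Suc_ratio:
  assumes k: "k = Suc K" and n: "n = 2 * K + 2 + r"
  shows "vcoef m s q (Suc n) k * (qint q (Suc r) * qint q (2 * (n + m)))
       = vcoef m s q n k * (qint q (Suc n) * qint q (2 * (n + m - k)))"
proof -
  define a where "a = n + m - k"
  have a1: "1 \<le> a" and N1: "1 \<le> 2 * (n + m)" and ak: "a + k = n + m"
    unfolding a_def using k n by simp_all
  have Vn: "vcoef m s q n k = (- s) ^ k * q ^ (k ^ 2) * qfact q n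
                              / (qfact q r * qfact_even q k * qrise_even q a k)"
    by (rule vcoef_closed) (use k n a_def in presburger)+
  have VSuc: "vcoef m s q (Suc n) k = (- s) ^ k * q ^ (k ^ 2) * qfact q (Suc n)
                              / (qfact q (Suc r) * qfact_even q k * qrise_even q (Suc a) k)"
    by (rule vcoef_closed) (use k n a_def in presburger)+
  have shift: "qrise_even q (Suc a) k = qrise_even q a k * qint q (2 * (n + m)) / qint q (2 * a)"
    using qrise_even_shift[of q a k] a1 unfolding ak by (simp add: field_simps)
  show ?thesis unfolding Vn VSuc shift a_def[symmetric] qfact_Suc using a1 N1
    by (simp add: field_simps)
qed

lemma vcoef_pred_ratio:
  assumes k: "k = Suc K" and n: "n = 2 * K + 2 + r"
  shows "rcoef m s q n * vcoef m s q (n - 1) K * (qint q (Suc r) * qint q (2 * (n + m)))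
       = - vcoef m s q n k * (q ^ Suc r * qint q (2 * K + 2) * qint q (n + 2 * m - 1))"
proof -
  define a where "a = n + m - k"
  define M where "M = 2 * (n + m) - 2"
  have a1: "1 \<le> a" and M1: "1 \<le> M" and N1: "1 \<le> 2 * (n + m)"
    unfolding a_def M_def using k n by simp_all
  have Vn: "vcoef m s q n k = (- s) ^ k * q ^ (k ^ 2) * qfact q n
                              / (qfact q r * qfact_even q k * qrise_even q a k)"
    by (rule vcoef_closed) (use k n a_def in presburger)+
  have Vpred: "vcoef m s q (n - 1) K = (- s) ^ K * q ^ (K ^ 2) * qfact q (n - 1)
                              / (qfact q (Suc r) * qfact_even q K * qrise_even q a K)"
    by (rule vcoef_closed) (use k n a_def in presburger)+
  have rc: "rcoef m s q n = s * q ^ n * qint q n * qint q (n + 2 * m - 1)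
                            / (qint q (2 * (n + m)) * qint q M)"
  proof -
    have e: "2 * m + 2 * n = 2 * (n + m)" "2 * (n + m) - 2 = M" unfolding M_def by simp_all
    have "n \<noteq> 0" "n \<noteq> 1" using n by simp_all
    then show ?thesis unfolding rcoef_def e by simp
  qed
  have W: "qrise_even q a k = qrise_even q a K * qint q M"
    unfolding k qrise_even_Suc using k n unfolding a_def M_def by (simp add: algebra_simps)
  have E: "qfact_even q k = qfact_even q K * qint q (2 * K + 2)"
    unfolding k qfact_even_Suc by simp
  have P: "q ^ (k ^ 2) = q ^ (K ^ 2) * q ^ (2 * K + 1)" "q ^ n = q ^ (2 * K + 1) * q ^ Suc r"
    "(- s) ^ k = (- s) ^ K * (- s)"
    unfolding k n by (simp_all only: power_Suc_square power_add[symmetric]) simp_all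
  have F: "qfact q n = qfact q (n - 1) * qint q n" using qfact_pred[of n] n by simp
  show ?thesis unfolding Vn Vpred rc W E P F qfact_Suc[of q r] using a1 M1 N1
    by (simp add: field_simps)
qed

text \<open>Generic case \<open>2k \<le> n\<close>: by the two ratios, the recurrence is the exchange identity
  \<open>[n+1][2(n+m-k)] = [r+1][2(n+m)] + q^(r+1) [2k][n+2m-1]\<close>.\<close>
lemma vcoef_rec_interior:
  assumes k: "k = Suc K" and n: "n = 2 * K + 2 + r"
  shows "vcoef m s q n k = vcoef m s q (Suc n) k + rcoef m s q n * vcoef m s q (n - 1) K"
proof -
  define D where "D = qint q (Suc r) * qint q (2 * (n + m))"
  define X where "X = q ^ Suc r * qint q (2 * K + 2) * qint q (n + 2 * m - 1)"
  have D0: "D \<noteq> 0" unfolding D_def using n by simp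
  have exchange: "qint q (Suc n) * qint q (2 * (n + m - k)) = D + X"
  proof -
    have "Suc r + (2 * K + 2) = Suc n" "n + 2 * m - 1 + Suc r = 2 * (n + m - k)"
      "n + 2 * m - 1 + Suc r + (2 * K + 2) = 2 * (n + m)"
      using k n by simp_all
    then show ?thesis
      using qint_exchange[of q "Suc r" "2 * K + 2" "n + 2 * m - 1"] unfolding D_def X_def
      by (simp only:)
  qed
  have "(vcoef m s q (Suc n) k + rcoef m s q n * vcoef m s q (n - 1) K) * D
      = vcoef m s q n k * (qint q (Suc n) * qint q (2 * (n + m - k))) - vcoef m s q n k * X"
    using vcoef_Suc_ratio[OF k n, of m s] vcoef_pred_ratio[OF k n, of m s]
    unfolding D_def X_def by (simp add: distrib_right)
  also have "\<dots> = vcoef m s q n k * D"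
    unfolding exchange by (simp add: algebra_simps)
  finally show ?thesis using D0 by simp
qed

lemma vcoef_rec_edge:
  assumes k: "k = Suc K" and n: "n = 2 * K + 1" and K: "1 \<le> K"
  shows "vcoef m s q (Suc n) k + rcoef m s q n * vcoef m s q (n - 1) K = 0"
proof -
  define b where "b = m + K"
  have b1: "1 \<le> b" unfolding b_def using K by simp
  have VSuc: "vcoef m s q (Suc n) k = (- s) ^ k * q ^ (k ^ 2) * qfact q (Suc n)
                              / (qfact q 0 * qfact_even q k * qrise_even q (Suc b) k)"
    by (rule vcoef_closed) (use k n b_def in presburger)+
  have Vpred: "vcoef m s q (n - 1) K = (- s) ^ K * q ^ (K ^ 2) * qfact q (n - 1)
                              / (qfact q 0 * qfact_even q K * qrise_even q b K)"
    by (rule vcoef_closed) (use k n b_def K in presburger)+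
  have rc: "rcoef m s q n = s * q ^ (2 * K + 1) * qint q n * qint q (2 * b)
                            / (qint q (2 * (Suc b + K)) * qint q (2 * (b + K)))"
  proof -
    have e: "2 * m + 2 * n = 2 * (Suc b + K)" "2 * (Suc b + K) - 2 = 2 * (b + K)"
      "n + 2 * m - 1 = 2 * b"
      unfolding b_def n by simp_all
    have "n \<noteq> 0" "n \<noteq> 1" using n K by simp_all
    then show ?thesis unfolding rcoef_def e using n by simp
  qed
  have W: "qrise_even q (Suc b) k = qrise_even q b K * qint q (2 * (b + K)) * qint q (2 * (Suc b + K))
                                    / qint q (2 * b)"
    using qrise_even_shift[of q b K] b1 unfolding k qrise_even_Suc by (simp add: field_simps)
  have E: "qfact_even q k = qfact_even q K * qint q (2 * K + 2)"
    unfolding k qfact_even_Suc by simp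
  have P: "q ^ (k ^ 2) = q ^ (K ^ 2) * q ^ (2 * K + 1)" "(- s) ^ k = (- s) ^ K * (- s)"
    unfolding k by (simp_all only: power_Suc_square) simp
  have F: "qfact q (Suc n) = qfact q (n - 1) * qint q n * qint q (2 * K + 2)"
    using qfact_pred[of n] qfact_Suc[of q n] n by simp
  show ?thesis unfolding VSuc Vpred rc W E P F using b1 by (simp add: field_simps)
qed

lemma vcoef_rec_one: "vcoef m s q 2 1 + rcoef m s q 1 * vcoef m s q 0 0 = 0"
proof -
  have "qfact q 2 = qint q 2" by (simp add: qfact_def qint_def numeral_2_eq_2)
  moreover have "qfact_even q 1 = qint q 2" "qrise_even q (m + 1) 1 = qint q (2 * m + 2)"
    by (simp_all add: qfact_even_def qrise_even_def)
  moreover have "vcoef m s q 2 1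
      = (- s) ^ 1 * q ^ (1 ^ 2) * qfact q 2 / (qfact q 0 * qfact_even q 1 * qrise_even q (m + 1) 1)"
    by (rule vcoef_closed) simp_all
  ultimately have "vcoef m s q 2 1 = - s * q / qint q (2 * m + 2)"
    by (simp add: field_simps)
  then show ?thesis by (simp add: rcoef_def vcoef_0)
qed

lemma vcoef_rec:
  "vcoef m s q n k
     = vcoef m s q (Suc n) k + (if k = 0 then 0 else rcoef m s q n * vcoef m s q (n - 1) (k - 1))"
proof (cases k)
  case 0
  then show ?thesis by (simp add: vcoef_0)
next
  case (Suc K)
  have "n + 1 < 2 * k \<or> (n = 1 \<and> K = 0) \<or> (n = 2 * K + 1 \<and> 1 \<le> K) \<or> 2 * K + 2 \<le> n"
    using Suc by linarith
  then consider (beyond) "n + 1 < 2 * k" | (one) "n = 1" "K = 0"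
    | (edge) "n = 2 * K + 1" "1 \<le> K" | (interior) r where "n = 2 * K + 2 + r"
    using le_Suc_ex by blast
  then show ?thesis
  proof cases
    case beyond
    then have "\<not> k \<le> n div 2" "\<not> k \<le> Suc n div 2" "n \<noteq> 0 \<Longrightarrow> \<not> K \<le> (n - 1) div 2"
      using Suc by presburger+
    then show ?thesis using Suc by (cases "n = 0") (simp_all add: vcoef_def rcoef_def)
  next
    case one
    then show ?thesis using Suc vcoef_rec_one[of m s] by (simp add: vcoef_def numeral_2_eq_2)
  next
    case edge
    then show ?thesis using Suc vcoef_rec_edge[of k K n m s] by (simp add: vcoef_def)
  next
    case interior
    then show ?thesis using Suc vcoef_rec_interior[of k K n r m s] by simp
  qed
qed

section \<open>Recurrence for the coefficients of the expansion of \<open>x^n\<close>\<close>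

lemma xcoef_Suc_ratio:
  assumes j: "j = Suc J" and n: "n = 2 * J + 2 + r"
  shows "xcoef m s q (Suc n) j * (qint q (Suc r) * qint q (2 * (m + r + 1 + j)))
       = xcoef m s q n j * (qint q (Suc n) * qint q (2 * (m + r + 1)))"
proof -
  define c where "c = m + r + 1"
  have c1: "1 \<le> c" unfolding c_def by simp
  have Xn: "xcoef m s q n j = q ^ j * s ^ j * qfact q n
                              / (qfact q r * qfact_even q j * qrise_even q c j)"
    by (rule xcoef_closed) (use j n c_def in presburger)+
  have XSuc: "xcoef m s q (Suc n) j = q ^ j * s ^ j * qfact q (Suc n)
                              / (qfact q (Suc r) * qfact_even q j * qrise_even q (Suc c) j)"
    by (rule xcoef_closed) (use j n c_def in presburger)+
  have shift: "qrise_even q (Suc c) j = qrise_even q c j * qint q (2 * (c + j)) / qint q (2 * c)"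
    using qrise_even_shift[of q c j] c1 by (simp add: field_simps)
  show ?thesis unfolding Xn XSuc shift c_def[symmetric] qfact_Suc using c1
    by (simp add: field_simps)
qed

lemma xcoef_pred_ratio:
  assumes j: "j = Suc J" and n: "n = 2 * J + 2 + r"
  shows "rcoef m s q (n + 2 - 2 * j) * xcoef m s q n J * (qint q (Suc r) * qint q (2 * (m + r + 1 + j)))
       = xcoef m s q n j * (q ^ Suc r * qint q (2 * J + 2) * qint q (r + 2 * m + 1))"
proof -
  define c where "c = m + r + 1"
  have c1: "1 \<le> c" unfolding c_def by simp
  have Xn: "xcoef m s q n j = q ^ j * s ^ j * qfact q n
                              / (qfact q r * qfact_even q j * qrise_even q c j)"
    by (rule xcoef_closed) (use j n c_def in presburger)+
  have Xpred: "xcoef m s q n J = q ^ J * s ^ J * qfact q n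
                              / (qfact q (Suc (Suc r)) * qfact_even q J * qrise_even q (Suc (Suc c)) J)"
    by (rule xcoef_closed) (use j n c_def in presburger)+
  have rc: "rcoef m s q (n + 2 - 2 * j) = s * q ^ Suc (Suc r) * qint q (Suc (Suc r)) * qint q (r + 2 * m + 1)
                                         / (qint q (2 * Suc c) * qint q (2 * c))"
  proof -
    have e: "n + 2 - 2 * j = Suc (Suc r)" "2 * m + 2 * Suc (Suc r) = 2 * Suc c"
      "2 * Suc c - 2 = 2 * c" "Suc (Suc r) + 2 * m - 1 = r + 2 * m + 1"
      using n j unfolding c_def by simp_all
    show ?thesis unfolding e rcoef_def by simp
  qed
  have W: "qrise_even q c j = qint q (2 * c) * qint q (2 * Suc c) * qrise_even q (Suc (Suc c)) J
                              / qint q (2 * (c + j))"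
    using qrise_even_shift[of q "Suc c" J] c1 unfolding j qrise_even_Suc_left
    by (simp add: field_simps)
  have E: "qfact_even q j = qfact_even q J * qint q (2 * J + 2)"
    unfolding j qfact_even_Suc by simp
  have P: "q ^ j = q ^ J * q" "s ^ j = s ^ J * s" unfolding j by simp_all
  show ?thesis unfolding Xn Xpred rc W E P qfact_Suc c_def[symmetric] using c1
    by (simp add: field_simps)
qed

text \<open>Generic case \<open>2j \<le> n\<close>, again by the exchange identity.\<close>
lemma xcoef_rec_interior:
  assumes j: "j = Suc J" and n: "n = 2 * J + 2 + r"
  shows "xcoef m s q (Suc n) j = xcoef m s q n j + rcoef m s q (n + 2 - 2 * j) * xcoef m s q n J"
proof -
  define D where "D = qint q (Suc r) * qint q (2 * (m + r + 1 + j))"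
  define X where "X = q ^ Suc r * qint q (2 * J + 2) * qint q (r + 2 * m + 1)"
  have D0: "D \<noteq> 0" unfolding D_def by simp
  have exchange: "qint q (Suc n) * qint q (2 * (m + r + 1)) = D + X"
  proof -
    have "Suc r + (2 * J + 2) = Suc n" "r + 2 * m + 1 + Suc r = 2 * (m + r + 1)"
      "r + 2 * m + 1 + Suc r + (2 * J + 2) = 2 * (m + r + 1 + j)"
      using j n by simp_all
    then show ?thesis
      using qint_exchange[of q "Suc r" "2 * J + 2" "r + 2 * m + 1"] unfolding D_def X_def
      by (simp only:)
  qed
  have "xcoef m s q (Suc n) j * D
      = xcoef m s q n j * (qint q (Suc n) * qint q (2 * (m + r + 1)))"
    using xcoef_Suc_ratio[OF j n, of m s] unfolding D_def .
  also have "\<dots> = xcoef m s q n j * D + rcoef m s q (n + 2 - 2 * j) * xcoef m s q n J * D"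
    using xcoef_pred_ratio[OF j n, of m s] unfolding exchange D_def X_def
    by (simp add: algebra_simps)
  finally show ?thesis using D0 by (simp add: distrib_right[symmetric])
qed

lemma xcoef_rec_edge:
  assumes j: "j = Suc J" and n: "n = 2 * J + 1"
  shows "xcoef m s q (Suc n) j = rcoef m s q (n + 2 - 2 * j) * xcoef m s q n J"
proof -
  define W where "W = qrise_even q (m + 2) J"
  have W0: "W \<noteq> 0" unfolding W_def by simp
  have xc_Suc: "xcoef m s q (Suc n) j = q ^ j * s ^ j * qfact q (Suc n)
                                      / (qfact q 0 * qfact_even q j * qrise_even q (m + 1) j)"
    by (rule xcoef_closed) (use j n in presburger)+
  have xc_n: "xcoef m s q n J = q ^ J * s ^ J * qfact q n / (qfact q 1 * qfact_even q J * W)"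
    unfolding W_def by (rule xcoef_closed) (use j n in presburger)+
  have E1: "qfact_even q j = qfact_even q J * qint q (2 * J + 2)"
    unfolding j qfact_even_Suc by simp
  have W1: "qrise_even q (m + 1) j = qint q (2 * m + 2) * W"
    unfolding j qrise_even_Suc_left W_def by simp
  have F: "qfact q (Suc n) = qfact q n * qint q (2 * J + 2)" using qfact_Suc[of q n] n by simp
  have "qfact q 1 = 1" by (simp add: qfact_def qint_def)
  moreover have "n + 2 - 2 * j = 1" using n j by simp
  moreover have "rcoef m s q 1 = s * q / qint q (2 * m + 2)" by (simp add: rcoef_def)
  ultimately show ?thesis unfolding xc_Suc xc_n E1 W1 F unfolding j using W0
    by (simp add: field_simps)
qed

lemma xcoef_rec:
  "xcoef m s q (Suc n) j = xcoef m s q n j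
     + (if j = 0 then 0 else rcoef m s q (n + 2 - 2 * j) * xcoef m s q n (j - 1))"
proof (cases j)
  case 0
  then show ?thesis by (simp add: xcoef_0)
next
  case (Suc J)
  have "n + 1 < 2 * j \<or> n = 2 * J + 1 \<or> 2 * J + 2 \<le> n"
    using Suc by linarith
  then consider (beyond) "n + 1 < 2 * j" | (edge) "n = 2 * J + 1"
    | (interior) r where "n = 2 * J + 2 + r"
    using le_Suc_ex by blast
  then show ?thesis
  proof cases
    case beyond
    then have "\<not> j \<le> n div 2" "\<not> j \<le> Suc n div 2" "J \<le> n div 2 \<longrightarrow> n + 2 - 2 * j = 0"
      using Suc by presburger+
    then show ?thesis using Suc by (auto simp add: xcoef_def rcoef_def)
  next
    case edge
    then show ?thesis using Suc xcoef_rec_edge[of j J n m s] by (simp add: xcoef_def)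
  next
    case interior
    then show ?thesis using Suc xcoef_rec_interior[of j J n r m s] by simp
  qed
qed

section \<open>The three-term recurrence for \<open>v_n\<close>\<close>

lemma smult_sum_right: "smult c (sum f A) = (\<Sum>x\<in>A. smult c (f x))"
  by (induct A rule: infinite_finite_induct) (auto simp: smult_add_right)

lemma x_times_monom: "[:0, 1:] * smult c (monom (1::'a::field) k) = smult c (monom 1 (Suc k))"
  by (simp add: monom_Suc)

lemma vpoly_as_sum:
  assumes N: "n \<le> N"
  shows "vpoly m s q n = (\<Sum>k\<le>N. smult (vcoef m s q n k) (monom 1 (n - 2 * k)))"
proof (cases "n = 0")
  case True
  have "(\<Sum>k\<le>N. smult (vcoef m s q n k) (monom 1 (n - 2 * k))) = (\<Sum>k\<le>N. if k = 0 then 1 else 0)"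
    by (rule sum.cong) (simp_all add: vcoef_def qfact_even_def qrise_even_def True)
  also have "\<dots> = 1" by (simp add: sum.delta')
  finally show ?thesis using True by (simp add: vpoly_def)
next
  case False
  have "vpoly m s q n = (\<Sum>k=0..n div 2. smult (vcoef m s q n k) (monom 1 (n - 2 * k)))"
    unfolding vpoly_def if_not_P[OF False]
    by (rule sum.cong[OF refl], subst vcoef_explicit) (use False in auto)
  also have "\<dots> = (\<Sum>k\<le>N. smult (vcoef m s q n k) (monom 1 (n - 2 * k)))"
    by (rule sum.mono_neutral_left) (use N in \<open>auto simp: vcoef_def\<close>)
  finally show ?thesis .
qed

lemma vcoef_rec_monom:
  "smult (vcoef m s q n k) (monom 1 (Suc (n - 2 * k))) =
     smult (vcoef m s q (Suc n) k) (monom 1 (Suc n - 2 * k)) +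
     (if k = 0 then 0
      else smult (rcoef m s q n * vcoef m s q (n - 1) (k - 1)) (monom 1 (n - 1 - 2 * (k - 1))))"
proof -
  note R = vcoef_rec[of m s n k]
  consider "2 * k \<le> n" | "2 * k = n + 1" | "n + 1 < 2 * k" by linarith
  then show ?thesis
  proof cases
    case 1
    have e: "Suc (n - 2 * k) = Suc n - 2 * k" using 1 by simp
    show ?thesis
    proof (cases "k = 0")
      case True
      then show ?thesis using R by simp
    next
      case False
      have "n - 1 - 2 * (k - 1) = Suc n - 2 * k" using 1 False by simp
      then show ?thesis unfolding e using R False by (simp add: smult_add_left)
    qed
  next
    case 2
    have "Suc n - 2 * k = 0" "n - 1 - 2 * (k - 1) = 0" "vcoef m s q n k = 0" "k \<noteq> 0"
      using 2 by (simp_all add: vcoef_def)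
    then show ?thesis using R by (simp add: smult_add_left[symmetric])
  next
    case 3
    then have "vcoef m s q n k = 0" "vcoef m s q (Suc n) k = 0" "k \<noteq> 0"
      by (auto simp add: vcoef_def)
    moreover from this have "rcoef m s q n * vcoef m s q (n - 1) (k - 1) = 0"
      using R by simp
    ultimately show ?thesis by simp
  qed
qed

lemma vpoly_rec:
  "[:0, 1:] * vpoly m s q n = vpoly m s q (Suc n) + smult (rcoef m s q n) (vpoly m s q (n - 1))"
proof -
  have "[:0, 1:] * vpoly m s q n = (\<Sum>k\<le>Suc n. smult (vcoef m s q n k) (monom 1 (Suc (n - 2 * k))))"
    unfolding vpoly_as_sum[of n "Suc n", OF le_SucI[OF order_refl]] sum_distrib_left x_times_monom ..
  also have "\<dots> = (\<Sum>k\<le>Suc n. smult (vcoef m s q (Suc n) k) (monom 1 (Suc n - 2 * k)))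
     + (\<Sum>k\<le>Suc n. (if k = 0 then 0
          else smult (rcoef m s q n * vcoef m s q (n - 1) (k - 1)) (monom 1 (n - 1 - 2 * (k - 1)))))"
    unfolding vcoef_rec_monom sum.distrib ..
  also have "(\<Sum>k\<le>Suc n. (if k = 0 then 0
          else smult (rcoef m s q n * vcoef m s q (n - 1) (k - 1)) (monom 1 (n - 1 - 2 * (k - 1)))))
      = (\<Sum>k\<le>n. smult (rcoef m s q n * vcoef m s q (n - 1) k) (monom 1 (n - 1 - 2 * k)))"
    unfolding sum.atMost_Suc_shift by simp
  also have "\<dots> = smult (rcoef m s q n) (vpoly m s q (n - 1))"
    unfolding vpoly_as_sum[of "n - 1" n, OF diff_le_self] smult_sum_right by (simp add: smult_smult)
  finally show ?thesis using vpoly_as_sum[of "Suc n" "Suc n" m s, OF order_refl] by simp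
qed

section \<open>Expansion of \<open>x^n\<close> in the basis \<open>v_n\<close>\<close>

lemma xcoef_vanish: "n < 2 * j \<Longrightarrow> xcoef m s q n j = 0"
  by (simp add: xcoef_def)

text \<open>Multiplying the expansion of \<open>x^n\<close> by \<open>x\<close>, the \<open>v_(n+1-2j)\<close> terms and the shifted
  \<open>g v_(n-1-2j)\<close> terms recombine by \<open>xcoef_rec\<close>.\<close>
lemma monom_expansion: "monom 1 n = (\<Sum>j\<le>n. smult (xcoef m s q n j) (vpoly m s q (n - 2 * j)))"
proof (induction n)
  case 0
  then show ?case by (simp add: xcoef_0 vpoly_def)
next
  case (Suc n)
  let ?B = "xcoef m s q n" and ?v = "vpoly m s q"
  have "monom 1 (Suc n) = [:0, 1:] * monom (1::'a) n" using x_times_monom[of 1 n] by simp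
  also have "\<dots> = (\<Sum>j\<le>n. smult (?B j) ([:0, 1:] * ?v (n - 2 * j)))"
    unfolding Suc.IH sum_distrib_left by (simp add: mult_smult_right)
  also have "\<dots> = (\<Sum>j\<le>n. smult (?B j) (?v (Suc (n - 2 * j))))
      + (\<Sum>j\<le>n. smult (rcoef m s q (n - 2 * j) * ?B j) (?v (n - 2 * j - 1)))"
    unfolding vpoly_rec smult_add_right sum.distrib by (simp add: smult_smult mult.commute)
  also have "(\<Sum>j\<le>n. smult (?B j) (?v (Suc (n - 2 * j))))
      = (\<Sum>j\<le>Suc n. smult (?B j) (?v (Suc n - 2 * j)))"
  proof -
    have "smult (?B j) (?v (Suc (n - 2 * j))) = smult (?B j) (?v (Suc n - 2 * j))" for j
      by (cases "2 * j \<le> n") (simp_all add: Suc_diff_le xcoef_vanish)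
    then show ?thesis using xcoef_vanish[of n "Suc n"] by simp
  qed
  also have "(\<Sum>j\<le>n. smult (rcoef m s q (n - 2 * j) * ?B j) (?v (n - 2 * j - 1)))
     = (\<Sum>j\<le>Suc n. (if j = 0 then 0
          else smult (rcoef m s q (n + 2 - 2 * j) * ?B (j - 1)) (?v (Suc n - 2 * j))))"
  proof -
    have "\<And>i. n + 2 - 2 * Suc i = n - 2 * i" "\<And>i. Suc n - 2 * Suc i = n - 2 * i - 1"
      by simp_all
    then show ?thesis unfolding sum.atMost_Suc_shift by (simp del: mult_Suc_right)
  qed
  also have "(\<Sum>j\<le>Suc n. smult (?B j) (?v (Suc n - 2 * j)))
     + (\<Sum>j\<le>Suc n. (if j = 0 then 0
          else smult (rcoef m s q (n + 2 - 2 * j) * ?B (j - 1)) (?v (Suc n - 2 * j))))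
     = (\<Sum>j\<le>Suc n. smult (xcoef m s q (Suc n) j) (?v (Suc n - 2 * j)))"
    unfolding sum.distrib[symmetric] by (rule sum.cong[OF refl]) (simp add: xcoef_rec smult_add_left)
  finally show ?case .
qed

lemma monom_expansion_explicit:
  "monom 1 n =
     (\<Sum>k=0..n div 2.
        smult ((qfact q n / (qfact q k * qfact q (n - 2 * k)))
               * (qfact q (n + m - 2 * k) / qfact q (n + m - k))
               * (q ^ k * s ^ k / (qpoch (- q) q k * qpoch (- (q ^ (n + m + 1 - 2 * k))) q k)))
              (vpoly m s q (n - 2 * k)))"
proof -
  have "(\<Sum>k=0..n div 2.
        smult ((qfact q n / (qfact q k * qfact q (n - 2 * k)))
               * (qfact q (n + m - 2 * k) / qfact q (n + m - k))
               * (q ^ k * s ^ k / (qpoch (- q) q k * qpoch (- (q ^ (n + m + 1 - 2 * k))) q k)))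
              (vpoly m s q (n - 2 * k)))
     = (\<Sum>k=0..n div 2. smult (xcoef m s q n k) (vpoly m s q (n - 2 * k)))"
    by (rule sum.cong[OF refl], subst xcoef_explicit) auto
  also have "\<dots> = (\<Sum>k\<le>n. smult (xcoef m s q n k) (vpoly m s q (n - 2 * k)))"
    by (rule sum.mono_neutral_left) (auto simp: xcoef_def)
  finally show ?thesis using monom_expansion[of n m s] by simp
qed

section \<open>Moments of the functional\<close>

text \<open>A functional with \<open>\<Phi>(v_n) = [n = 0]\<close> picks out the coefficient of \<open>v_0\<close> in the
  expansion of \<open>x^N\<close>, which exists only for even \<open>N\<close>.\<close>
lemma functional_monom:
  assumes lin: "lin_functional \<Phi>"
      and dual: "\<forall>n. \<Phi> (vpoly m s q n) = (if n = 0 then 1 else 0)"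
  shows "\<Phi> (monom 1 N) = (if even N then xcoef m s q N (N div 2) else 0)"
proof -
  have "\<Phi> (monom 1 N) = (\<Sum>j\<le>N. \<Phi> (smult (xcoef m s q N j) (vpoly m s q (N - 2 * j))))"
    using monom_expansion[of N m s] lin_functional_sum[OF lin] by metis
  also have "\<dots> = (\<Sum>j\<le>N. if j = N div 2 then (if even N then xcoef m s q N j else 0) else 0)"
  proof (rule sum.cong[OF refl])
    fix j
    have "\<Phi> (smult (xcoef m s q N j) (vpoly m s q (N - 2 * j)))
        = xcoef m s q N j * (if N - 2 * j = 0 then 1 else 0)"
      using lin dual unfolding lin_functional_def by (simp del: diff_is_0_eq diff_is_0_eq')
    also have "\<dots> = (if j = N div 2 then (if even N then xcoef m s q N j else 0) else 0)"
    proof (cases "N < 2 * j")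
      case True
      then show ?thesis using xcoef_vanish[of N j] by simp
    next
      case False
      then have "(N - 2 * j = 0) = (j = N div 2 \<and> even N)" by presburger
      then show ?thesis by simp
    qed
    finally show "\<Phi> (smult (xcoef m s q N j) (vpoly m s q (N - 2 * j)))
        = (if j = N div 2 then (if even N then xcoef m s q N j else 0) else 0)" .
  qed
  also have "\<dots> = (if even N then xcoef m s q N (N div 2) else 0)"
    by (simp add: sum.delta')
  finally show ?thesis .
qed

lemma xcoef_top:
  "xcoef m 1 q (2 * n) n = q ^ n / (qpoch (- q) q n * qpoch (- (q ^ (m + 1))) q n)
                           * (qfact q (2 * n) * qfact q m / (qfact q n * qfact q (m + n)))"
proof -
  have e: "2 * n - 2 * n = 0" "2 * n + m - 2 * n = m" "2 * n + m - n = m + n"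
    "2 * n + m + 1 - 2 * n = m + 1"
    by simp_all
  show ?thesis using xcoef_explicit[of n "2 * n" m 1] unfolding e by (simp add: ac_simps)
qed

end

theorem mainTheorem13:
  fixes q s :: "'a::field"
  assumes qint_nz: "\<And>j. j \<ge> 1 \<Longrightarrow> qint q j \<noteq> 0"
      and qpow_nz: "\<And>j. j \<ge> 1 \<Longrightarrow> 1 + q ^ j \<noteq> 0"
  shows "(\<forall>m n. monom 1 n =
            (\<Sum>k=0..n div 2.
               smult ((qfact q n / (qfact q k * qfact q (n - 2 * k)))
                      * (qfact q (n + m - 2 * k) / qfact q (n + m - k))
                      * (q ^ k * s ^ k
                         / (qpoch (- q) q k * qpoch (- (q ^ (n + m + 1 - 2 * k))) q k)))
                     (vpoly m s q (n - 2 * k))))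
       \<and> (\<forall>m (\<Phi> :: 'a poly \<Rightarrow> 'a).
            lin_functional \<Phi> \<longrightarrow>
            (\<forall>n. \<Phi> (vpoly m 1 q n) = (if n = 0 then 1 else 0)) \<longrightarrow>
            (\<forall>n. \<Phi> (monom 1 (2 * n + 1)) = 0 \<and>
                 \<Phi> (monom 1 (2 * n)) =
                   q ^ n / (qpoch (- q) q n * qpoch (- (q ^ (m + 1))) q n)
                   * (qfact q (2 * n) * qfact q m / (qfact q n * qfact q (m + n)))))"
proof -
  interpret q_generic q using assms by unfold_locales auto
  have moments: "\<Phi> (monom 1 (2 * n + 1)) = 0 \<and>
      \<Phi> (monom 1 (2 * n)) = q ^ n / (qpoch (- q) q n * qpoch (- (q ^ (m + 1))) q n)
                             * (qfact q (2 * n) * qfact q m / (qfact q n * qfact q (m + n)))"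
    if "lin_functional \<Phi>" "\<forall>n. \<Phi> (vpoly m 1 q n) = (if n = 0 then 1 else 0)" for m \<Phi> n
    using functional_monom[OF that, of "2 * n + 1"] functional_monom[OF that, of "2 * n"]
    by (simp add: xcoef_top)
  show ?thesis using monom_expansion_explicit moments by blast
qed

end
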